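(* The function \[ F_0(k,a,b,c,d) = \frac{\Gamma(a+k)\Gamma(b+k)\Gamma(c+k)}{\Gamma(2d-a+k)\Gamma(2d-b+k)\Gamma(2d-c+k)}\cdot\frac{\Gamma(a+b+c-3d+\tfrac32)}{\Gamma(a+b-2d+1)\Gamma(a+c-2d+1)\Gamma(b+c-2d+1)} \] \[ \times\frac{(-1)^{a+b+c+d}}{\Gamma(a-d+\tfrac12)\Gamma(b-d+\tfrac12)\Gamma(c-d+\tfrac12)} \] is a WZ seed in the variables $a,b,c,d$.
   Context: A term $F(n_1,\dots,n_r)$ is hypergeometric in $n_1,\dots,n_r$ if each ratio $F(\dots,n_i+1,\dots)/F(\dots,n_i,\dots)$ is a rational function of $n_1,\dots,n_r$. Write $\Delta_n f(n)=f(n+1)-f(n)$. Two hypergeometric terms $F(n,k),G(n,k)$ form a WZ pair, and $G$ is called a WZ mate of $F$, if $\Delta_n F(n,k)=\Delta_k G(n,k)$. A hypergeometric term $F_0(k,a,b,\dots)$ (hypergeometric in $k,a,b,\dots$) is a WZ seed in the variables $a,b,\dots$ if for all integers $K,A,B,\dots$ and all complex $k_0$ and all values of the parameters $a,b,\dots$, the term $F(n,k)=F_0(Kn+k_0+k,\,An+a,\,Bn+b,\dots)$ has a WZ mate $G(n,k)$ (a hypergeometric term). Factors such as $(-1)^x$ or $z^x$ with non-integer exponent $x$ are understood as hypergeometric factors satisfying $(-1)^{x+1}=-(-1)^x$, $z^{x+1}=z\cdot z^x$ (e.g. defined via a fixed branch of the exponential). *)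

theory Defs
  imports "HOL-Analysis.Analysis" "HOL-Computational_Algebra.Polynomial"
begin

text \<open>Bivariate polynomials over the complex numbers, represented as polynomials in the
  first variable whose coefficients are polynomials in the second variable.\<close>
definition poly2 :: "complex poly poly \<Rightarrow> complex \<Rightarrow> complex \<Rightarrow> complex" where
  "poly2 P x y = poly (map_poly (\<lambda>q. poly q y) P) x"

text \<open>A term H(n,k) (n,k integers) is hypergeometric in n,k if both shift quotients
  H(n+1,k)/H(n,k) and H(n,k+1)/H(n,k) are rational functions p/q of n,k, stated in the
  usual denominator-free way: q(n,k) H(n+1,k) = p(n,k) H(n,k) with q a nonzero polynomial.\<close>
definition hypergeometric2 :: "(int \<Rightarrow> int \<Rightarrow> complex) \<Rightarrow> bool" where
  "hypergeometric2 H \<longleftrightarrow>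
     (\<exists>p q. q \<noteq> 0 \<and> (\<forall>n k. poly2 q (of_int n) (of_int k) * H (n + 1) k
                                  = poly2 p (of_int n) (of_int k) * H n k)) \<and>
     (\<exists>p q. q \<noteq> 0 \<and> (\<forall>n k. poly2 q (of_int n) (of_int k) * H n (k + 1)
                                  = poly2 p (of_int n) (of_int k) * H n k))"

text \<open>The factor (-1)^x for complex x, via the fixed branch exp(i pi x); it satisfies
  (-1)^(x+1) = -(-1)^x.\<close>
definition neg1pow :: "complex \<Rightarrow> complex" where
  "neg1pow x = exp (\<i> * of_real pi * x)"

text \<open>The seed F_0(k,a,b,c,d). Division by Gamma is the reciprocal Gamma function
  (in Isabelle, 1 / Gamma z = rGamma z for all z, an entire function).\<close>
definition F0 :: "complex \<Rightarrow> complex \<Rightarrow> complex \<Rightarrow> complex \<Rightarrow> complex \<Rightarrow> complex" where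
  "F0 k a b c d =
     Gamma (a + k) * Gamma (b + k) * Gamma (c + k)
       / (Gamma (2*d - a + k) * Gamma (2*d - b + k) * Gamma (2*d - c + k))
     * (Gamma (a + b + c - 3*d + 3/2)
       / (Gamma (a + b - 2*d + 1) * Gamma (a + c - 2*d + 1) * Gamma (b + c - 2*d + 1)))
     * (neg1pow (a + b + c + d)
       / (Gamma (a - d + 1/2) * Gamma (b - d + 1/2) * Gamma (c - d + 1/2)))"

definition F0_defined :: "complex \<Rightarrow> complex \<Rightarrow> complex \<Rightarrow> complex \<Rightarrow> complex \<Rightarrow> bool" where
  "F0_defined k a b c d \<longleftrightarrow>
     a + k \<notin> \<int>\<^sub>\<le>\<^sub>0 \<and> b + k \<notin> \<int>\<^sub>\<le>\<^sub>0 \<and> c + k \<notin> \<int>\<^sub>\<le>\<^sub>0 \<and>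
     a + b + c - 3*d + 3/2 \<notin> \<int>\<^sub>\<le>\<^sub>0"

end

theory Submission
  imports Defs
begin

text \<open>Up to a polynomial factor, \<open>F0\<close> is a term \<open>F0_core\<close> in which the Gamma factors of the
  denominator not involving \<open>k\<close> are advanced by one. A unit shift of \<open>k\<close> has the WZ mate \<open>F0\<close>
  itself, and a unit shift of \<open>a\<close> has an explicit mate (a polynomial times \<open>F0_core\<close>), certified
  by a cubic polynomial identity; by symmetry so do unit shifts of \<open>b\<close> and \<open>c\<close>. Walking along
  monotone lattice paths and telescoping gives a mate for every integer shift of \<open>(k, a, b, c)\<close>,
  and a shift of \<open>d\<close> is absorbed because moving \<open>a, b, c, d\<close> together by an integer only moves \<open>k\<close>.
  Lowering every Gamma argument and raising every reciprocal Gamma argument to its extreme value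
  along the path writes this mate as a polynomial times a product of Gamma values at affine
  arguments, so it is hypergeometric.\<close>

section \<open>Polynomial and hypergeometric terms\<close>

lemma poly2_add: "poly2 (P + Q) x y = poly2 P x y + poly2 Q x y"
proof -
  have "map_poly (\<lambda>q. poly q y) (P + Q) = map_poly (\<lambda>q. poly q y) P + map_poly (\<lambda>q. poly q y) Q"
    by (intro poly_eqI) (simp add: coeff_map_poly)
  then show ?thesis by (simp add: poly2_def)
qed

lemma poly2_mult: "poly2 (P * Q) x y = poly2 P x y * poly2 Q x y"
proof -
  have "map_poly (\<lambda>q. poly q y) (P * Q) = map_poly (\<lambda>q. poly q y) P * map_poly (\<lambda>q. poly q y) Q"
    by (intro poly_eqI) (simp add: coeff_map_poly coeff_mult poly_sum)
  then show ?thesis by (simp add: poly2_def)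
qed

lemma poly2_0 [simp]: "poly2 0 x y = 0"
  by (simp add: poly2_def)

lemma poly2_pCons: "poly2 (pCons q P) x y = poly q y + x * poly2 P x y"
  by (simp add: poly2_def map_poly_pCons)

definition poly_term :: "(int \<Rightarrow> int \<Rightarrow> complex) \<Rightarrow> bool" where
  "poly_term f \<longleftrightarrow> (\<exists>P. \<forall>n k. f n k = poly2 P (of_int n) (of_int k))"

lemma poly_term_const [intro]: "poly_term (\<lambda>n k. c)"
  unfolding poly_term_def by (rule exI[of _ "[:[:c:]:]"]) (simp add: poly2_pCons)

lemma poly_term_fst [intro]: "poly_term (\<lambda>n k. of_int n)"
  unfolding poly_term_def by (rule exI[of _ "[:0, 1:]"]) (simp add: poly2_pCons)

lemma poly_term_snd [intro]: "poly_term (\<lambda>n k. of_int k)"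
  unfolding poly_term_def by (rule exI[of _ "[:[:0, 1:]:]"]) (simp add: poly2_pCons)

lemma poly_term_add [intro]: "poly_term f \<Longrightarrow> poly_term g \<Longrightarrow> poly_term (\<lambda>n k. f n k + g n k)"
  unfolding poly_term_def by (metis poly2_add)

lemma poly_term_mult [intro]: "poly_term f \<Longrightarrow> poly_term g \<Longrightarrow> poly_term (\<lambda>n k. f n k * g n k)"
  unfolding poly_term_def by (metis poly2_mult)

lemma poly_term_uminus [intro]: "poly_term f \<Longrightarrow> poly_term (\<lambda>n k. - f n k)"
  using poly_term_mult[OF poly_term_const[of "-1"]] by simp

lemma poly_term_diff [intro]: "poly_term f \<Longrightarrow> poly_term g \<Longrightarrow> poly_term (\<lambda>n k. f n k - g n k)"
  using poly_term_add[OF _ poly_term_uminus] by simp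

lemma poly_term_sum [intro]: "(\<And>j. poly_term (f j)) \<Longrightarrow> poly_term (\<lambda>n k. \<Sum>j<(m::nat). f j n k)"
  by (induction m) auto

lemma poly_term_pochhammer [intro]: "poly_term f \<Longrightarrow> poly_term (\<lambda>n k. pochhammer (f n k) m)"
  by (induction m) (auto simp: pochhammer_Suc intro!: poly_term_mult poly_term_add)

lemma poly_term_poly_comp: "poly_term h \<Longrightarrow> poly_term (\<lambda>n k. poly q (h n k))"
  by (induction q) auto

lemma poly_term_poly2_comp:
  "poly_term g \<Longrightarrow> poly_term h \<Longrightarrow> poly_term (\<lambda>n k. poly2 P (g n k) (h n k))"
  by (induction P) (auto simp: poly2_pCons intro!: poly_term_add poly_term_mult poly_term_poly_comp)

lemma poly_term_shift: "poly_term f \<Longrightarrow> poly_term (\<lambda>n k. f (n + i) (k + j))"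
proof -
  assume "poly_term f"
  then obtain P where "\<And>n k. f n k = poly2 P (of_int n) (of_int k)"
    unfolding poly_term_def by blast
  then have "(\<lambda>n k. f (n + i) (k + j)) = (\<lambda>n k. poly2 P (of_int n + of_int i) (of_int k + of_int j))"
    by simp
  then show ?thesis
    by (simp only:) (intro poly_term_poly2_comp poly_term_add poly_term_fst poly_term_snd poly_term_const)
qed

definition rational_ratio :: "(int \<Rightarrow> int \<Rightarrow> complex) \<Rightarrow> (int \<Rightarrow> int \<Rightarrow> complex) \<Rightarrow> bool" where
  "rational_ratio f g \<longleftrightarrow> (\<exists>p q. q \<noteq> 0 \<and>
     (\<forall>n k. poly2 q (of_int n) (of_int k) * g n k = poly2 p (of_int n) (of_int k) * f n k))"

lemma hypergeometric2_iff_rational_ratio: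
  "hypergeometric2 H \<longleftrightarrow> rational_ratio H (\<lambda>n k. H (n + 1) k) \<and> rational_ratio H (\<lambda>n k. H n (k + 1))"
  unfolding hypergeometric2_def rational_ratio_def by simp

lemma rational_ratioI:
  assumes "poly_term q" "poly_term p" "q n0 k0 \<noteq> 0" "\<And>n k. q n k * g n k = p n k * f n k"
  shows "rational_ratio f g"
proof -
  obtain Q where Q: "\<And>n k. q n k = poly2 Q (of_int n) (of_int k)"
    using assms(1) unfolding poly_term_def by blast
  obtain P where P: "\<And>n k. p n k = poly2 P (of_int n) (of_int k)"
    using assms(2) unfolding poly_term_def by blast
  have "Q \<noteq> 0" using assms(3) Q[of n0 k0] by (auto simp: poly2_def)
  then show ?thesis unfolding rational_ratio_def using assms(4) P Q by metis
qed

lemma rational_ratio_mult: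
  assumes "rational_ratio f f'" "rational_ratio g g'"
  shows "rational_ratio (\<lambda>n k. f n k * g n k) (\<lambda>n k. f' n k * g' n k)"
proof -
  obtain p1 q1 where 1: "q1 \<noteq> 0"
    "\<And>n k. poly2 q1 (of_int n) (of_int k) * f' n k = poly2 p1 (of_int n) (of_int k) * f n k"
    using assms(1) unfolding rational_ratio_def by blast
  obtain p2 q2 where 2: "q2 \<noteq> 0"
    "\<And>n k. poly2 q2 (of_int n) (of_int k) * g' n k = poly2 p2 (of_int n) (of_int k) * g n k"
    using assms(2) unfolding rational_ratio_def by blast
  have "poly2 (q1 * q2) (of_int n) (of_int k) * (f' n k * g' n k)
      = poly2 (p1 * p2) (of_int n) (of_int k) * (f n k * g n k)" for n k
    using 1(2)[of n k] 2(2)[of n k] by (simp add: poly2_mult) (metis mult.assoc mult.left_commute)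
  then show ?thesis unfolding rational_ratio_def using 1(1) 2(1) by (metis mult_eq_0_iff)
qed

lemma hypergeometric2_mult:
  "hypergeometric2 f \<Longrightarrow> hypergeometric2 g \<Longrightarrow> hypergeometric2 (\<lambda>n k. f n k * g n k)"
  unfolding hypergeometric2_iff_rational_ratio by (auto intro: rational_ratio_mult)

lemma hypergeometric2_poly_term:
  assumes f: "poly_term f"
  shows "hypergeometric2 f"
proof (cases "\<exists>n0 k0. f n0 k0 \<noteq> 0")
  case True
  then obtain n0 k0 where "f n0 k0 \<noteq> 0" by blast
  then have "rational_ratio f (\<lambda>n k. f (n + i) (k + j))" for i j
    by (intro rational_ratioI[of f "\<lambda>n k. f (n + i) (k + j)" n0 k0] f poly_term_shift)
      (simp_all add: mult.commute)
  from this[of 1 0] this[of 0 1] show ?thesis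
    unfolding hypergeometric2_iff_rational_ratio by simp
next
  case False
  then show ?thesis
    unfolding hypergeometric2_iff_rational_ratio
    by (auto intro!: rational_ratioI[of "\<lambda>n k. 1" _ 0 0])
qed

lemma pochhammer_mult_Gamma_add:
  "pochhammer z m * Gamma (z + of_nat m) = (pochhammer z m)\<^sup>2 * Gamma z"
proof (cases "z \<in> \<int>\<^sub>\<le>\<^sub>0")
  case False
  then have "Gamma (z + of_nat m) = pochhammer z m * Gamma z"
    by (simp add: pochhammer_Gamma Gamma_eq_zero_iff)
  then show ?thesis by (simp add: power2_eq_square)
next
  case True
  then obtain j where j: "z = - of_nat j" by (auto elim!: nonpos_Ints_cases')
  show ?thesis
  proof (cases "j < m")
    case True
    then have "pochhammer z m = 0" using j by (auto simp: pochhammer_eq_0_iff)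
    then show ?thesis by simp
  next
    case False
    then have "z + of_nat m = - of_nat (j - m)" using j by (simp add: of_nat_diff)
    then show ?thesis using j by (simp add: Gamma_eq_zero_iff)
  qed
qed

lemma rational_ratio_Gamma_add:
  assumes g: "poly_term g" and nz: "pochhammer (g n0 k0) m \<noteq> 0"
  shows "rational_ratio (\<lambda>n k. Gamma (g n k)) (\<lambda>n k. Gamma (g n k + of_nat m))"
    and "rational_ratio (\<lambda>n k. Gamma (g n k + of_nat m)) (\<lambda>n k. Gamma (g n k))"
proof -
  have poch: "poly_term (\<lambda>n k. pochhammer (g n k) m)" "poly_term (\<lambda>n k. (pochhammer (g n k) m)\<^sup>2)"
    using g by (auto simp: power2_eq_square intro!: poly_term_mult)
  show "rational_ratio (\<lambda>n k. Gamma (g n k)) (\<lambda>n k. Gamma (g n k + of_nat m))"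
    by (rule rational_ratioI[OF poch nz]) (rule pochhammer_mult_Gamma_add)
  show "rational_ratio (\<lambda>n k. Gamma (g n k + of_nat m)) (\<lambda>n k. Gamma (g n k))"
    by (rule rational_ratioI[OF poch(2,1), of n0 k0]) (simp_all add: nz pochhammer_mult_Gamma_add)
qed

lemma rational_ratio_rGamma_add:
  assumes g: "poly_term g" and nz: "pochhammer (g n0 k0) m \<noteq> 0"
  shows "rational_ratio (\<lambda>n k. rGamma (g n k)) (\<lambda>n k. rGamma (g n k + of_nat m))"
    and "rational_ratio (\<lambda>n k. rGamma (g n k + of_nat m)) (\<lambda>n k. rGamma (g n k))"
proof -
  have poch: "poly_term (\<lambda>n k. pochhammer (g n k) m)" using g by auto
  show "rational_ratio (\<lambda>n k. rGamma (g n k)) (\<lambda>n k. rGamma (g n k + of_nat m))"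
    by (rule rational_ratioI[OF poch poly_term_const[of 1] nz]) (simp add: pochhammer_rGamma[symmetric])
  show "rational_ratio (\<lambda>n k. rGamma (g n k + of_nat m)) (\<lambda>n k. rGamma (g n k))"
    by (rule rational_ratioI[OF poly_term_const[of 1] poch]) (simp_all add: pochhammer_rGamma[symmetric])
qed

lemma pochhammer_nonzero_if_Re_pos: "0 < Re z \<Longrightarrow> pochhammer z m \<noteq> 0"
  by (auto simp: pochhammer_eq_0_iff)

text \<open>The Pochhammer symbol linking \<open>\<phi> h\<close> and \<open>\<phi> (h + m)\<close> is a polynomial that does not vanish
  where \<open>Re h > 0\<close>; a negative shift of \<open>g\<close> is a positive shift of \<open>h = g + \<delta>\<close> read backwards.\<close>
lemma rational_ratio_shift_int:
  assumes g: "poly_term g" and unbounded: "\<And>R. \<exists>n k. R < Re (g n k)"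
    and add: "\<And>h m n0 k0. poly_term h \<Longrightarrow> pochhammer (h n0 k0) m \<noteq> 0 \<Longrightarrow>
        rational_ratio (\<lambda>n k. \<phi> (h n k)) (\<lambda>n k. \<phi> (h n k + of_nat m)) \<and>
        rational_ratio (\<lambda>n k. \<phi> (h n k + of_nat m)) (\<lambda>n k. \<phi> (h n k))"
  shows "rational_ratio (\<lambda>n k. \<phi> (g n k)) (\<lambda>n k. \<phi> (g n k + of_int \<delta>))"
proof (cases "\<delta> \<ge> 0")
  case True
  obtain n0 k0 where "0 < Re (g n0 k0)" using unbounded by blast
  then have "pochhammer (g n0 k0) (nat \<delta>) \<noteq> 0" by (rule pochhammer_nonzero_if_Re_pos)
  then have "rational_ratio (\<lambda>n k. \<phi> (g n k)) (\<lambda>n k. \<phi> (g n k + of_nat (nat \<delta>)))"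
    using add[OF g] by blast
  then show ?thesis using True by simp
next
  case False
  let ?h = "\<lambda>n k. g n k + of_int \<delta>"
  obtain n0 k0 where "- of_int \<delta> < Re (g n0 k0)" using unbounded by blast
  then have "0 < Re (?h n0 k0)" by simp
  then have "pochhammer (?h n0 k0) (nat (-\<delta>)) \<noteq> 0" by (rule pochhammer_nonzero_if_Re_pos)
  moreover have "poly_term ?h" using g by auto
  ultimately have "rational_ratio (\<lambda>n k. \<phi> (?h n k + of_nat (nat (-\<delta>)))) (\<lambda>n k. \<phi> (?h n k))"
    using add by blast
  then show ?thesis using False by simp
qed

definition affine_term :: "(int \<Rightarrow> int \<Rightarrow> complex) \<Rightarrow> bool" where
  "affine_term g \<longleftrightarrow> (\<exists>\<alpha> \<beta> \<gamma>. \<forall>n k. g n k = of_int \<alpha> * of_int n + of_int \<beta> * of_int k + \<gamma>)"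

lemma affine_term_const [intro]: "affine_term (\<lambda>n k. c)"
  unfolding affine_term_def by (rule exI[of _ 0], rule exI[of _ 0]) simp

lemma affine_term_fst [intro]: "affine_term (\<lambda>n k. of_int \<alpha> * of_int n)"
  unfolding affine_term_def by (rule exI[of _ \<alpha>], rule exI[of _ 0]) simp

lemma affine_term_snd [intro]: "affine_term (\<lambda>n k. of_int k)"
  unfolding affine_term_def by (rule exI[of _ 0], rule exI[of _ 1]) simp

lemma affine_term_add [intro]: "affine_term f \<Longrightarrow> affine_term g \<Longrightarrow> affine_term (\<lambda>n k. f n k + g n k)"
proof -
  assume "affine_term f" "affine_term g"
  then obtain \<alpha> \<beta> \<gamma> \<alpha>' \<beta>' \<gamma>'
    where "\<And>n k. f n k = of_int \<alpha> * of_int n + of_int \<beta> * of_int k + \<gamma>"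
      and "\<And>n k. g n k = of_int \<alpha>' * of_int n + of_int \<beta>' * of_int k + \<gamma>'"
    unfolding affine_term_def by metis
  then have "\<And>n k. f n k + g n k = of_int (\<alpha> + \<alpha>') * of_int n + of_int (\<beta> + \<beta>') * of_int k + (\<gamma> + \<gamma>')"
    by (simp add: algebra_simps)
  then show ?thesis unfolding affine_term_def by blast
qed

lemma affine_term_uminus [intro]: "affine_term f \<Longrightarrow> affine_term (\<lambda>n k. - f n k)"
proof -
  assume "affine_term f"
  then obtain \<alpha> \<beta> \<gamma> where "\<And>n k. f n k = of_int \<alpha> * of_int n + of_int \<beta> * of_int k + \<gamma>"
    unfolding affine_term_def by metis
  then have "\<And>n k. - f n k = of_int (- \<alpha>) * of_int n + of_int (- \<beta>) * of_int k + (- \<gamma>)"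
    by simp
  then show ?thesis unfolding affine_term_def by blast
qed

lemma affine_term_diff [intro]: "affine_term f \<Longrightarrow> affine_term g \<Longrightarrow> affine_term (\<lambda>n k. f n k - g n k)"
  using affine_term_add[OF _ affine_term_uminus] by simp

lemma poly_term_affine_term [intro]: "affine_term g \<Longrightarrow> poly_term g"
proof -
  assume "affine_term g"
  then obtain \<alpha> \<beta> \<gamma> where "g = (\<lambda>n k. of_int \<alpha> * of_int n + of_int \<beta> * of_int k + \<gamma>)"
    unfolding affine_term_def by blast
  then show ?thesis by (auto intro!: poly_term_add poly_term_mult)
qed

lemma affine_Re_unbounded:
  assumes "\<alpha> \<noteq> 0 \<or> \<beta> \<noteq> 0"
  shows "\<exists>n k. R < Re (of_int \<alpha> * of_int n + of_int \<beta> * of_int k + (\<gamma>::complex))"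
proof -
  define N where "N = \<lceil>\<bar>R\<bar> + \<bar>Re \<gamma>\<bar>\<rceil> + 1"
  have N: "\<bar>R\<bar> + \<bar>Re \<gamma>\<bar> < real_of_int N" "0 \<le> N" unfolding N_def by linarith+
  have "1 \<le> \<alpha> * \<alpha> + \<beta> * \<beta>" using assms by (smt (verit) mult_le_0_iff zero_le_square)
  then have "N \<le> (\<alpha> * \<alpha> + \<beta> * \<beta>) * N" using N(2) mult_right_mono by fastforce
  then have "real_of_int N \<le> Re (of_int \<alpha> * of_int (\<alpha> * N) + of_int \<beta> * of_int (\<beta> * N))"
    by (simp add: algebra_simps flip: of_int_mult of_int_add)
  then have "R < Re (of_int \<alpha> * of_int (\<alpha> * N) + of_int \<beta> * of_int (\<beta> * N) + \<gamma>)"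
    using N(1) by simp
  then show ?thesis by blast
qed

lemma hypergeometric2_affine_comp:
  assumes g: "affine_term g"
    and shift: "\<And>h \<delta>. poly_term h \<Longrightarrow> (\<And>R. \<exists>n k. R < Re (h n k)) \<Longrightarrow>
        rational_ratio (\<lambda>n k. \<phi> (h n k)) (\<lambda>n k. \<phi> (h n k + of_int \<delta>))"
  shows "hypergeometric2 (\<lambda>n k. \<phi> (g n k))"
proof -
  obtain \<alpha> \<beta> \<gamma> where g_eq: "\<And>n k. g n k = of_int \<alpha> * of_int n + of_int \<beta> * of_int k + \<gamma>"
    using g unfolding affine_term_def by blast
  show ?thesis
  proof (cases "\<alpha> = 0 \<and> \<beta> = 0")
    case True
    then show ?thesis by (simp add: g_eq hypergeometric2_poly_term poly_term_const)
  next
    case False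
    have "\<exists>n k. R < Re (g n k)" for R
      unfolding g_eq by (rule affine_Re_unbounded) (use False in blast)
    then have "rational_ratio (\<lambda>n k. \<phi> (g n k)) (\<lambda>n k. \<phi> (g n k + of_int \<delta>))" for \<delta>
      using g by (intro shift) auto
    from this[of \<alpha>] this[of \<beta>] show ?thesis
      unfolding hypergeometric2_iff_rational_ratio by (simp add: g_eq algebra_simps)
  qed
qed

lemma hypergeometric2_Gamma_affine: "affine_term g \<Longrightarrow> hypergeometric2 (\<lambda>n k. Gamma (g n k))"
  by (rule hypergeometric2_affine_comp, assumption, rule rational_ratio_shift_int)
    (use rational_ratio_Gamma_add in auto)

lemma hypergeometric2_rGamma_affine: "affine_term g \<Longrightarrow> hypergeometric2 (\<lambda>n k. rGamma (g n k))"
  by (rule hypergeometric2_affine_comp, assumption, rule rational_ratio_shift_int)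
    (use rational_ratio_rGamma_add in auto)

lemma neg1pow_add: "neg1pow (x + y) = neg1pow x * neg1pow y"
  by (simp add: neg1pow_def distrib_left exp_add)

lemma rational_ratio_neg1pow_add: "rational_ratio (\<lambda>n k. neg1pow (h n k)) (\<lambda>n k. neg1pow (h n k + c))"
  by (rule rational_ratioI[OF poly_term_const[of 1] poly_term_const[of "neg1pow c"]])
    (simp_all add: neg1pow_add mult.commute)

lemma hypergeometric2_neg1pow_affine: "affine_term g \<Longrightarrow> hypergeometric2 (\<lambda>n k. neg1pow (g n k))"
  by (rule hypergeometric2_affine_comp) (simp_all add: rational_ratio_neg1pow_add)

section \<open>The seed and its unit shifts\<close>

lemma neg1pow_plus1: "neg1pow (z + 1) = - neg1pow z"
  by (simp add: neg1pow_def distrib_left exp_add)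

lemma rGamma_eq_mult_rGamma_succ: "w = z + 1 \<Longrightarrow> rGamma z = z * rGamma w"
  using rGamma_plus1[of z] by simp

lemma Gamma_succ_eq_mult_Gamma: "w = z + 1 \<Longrightarrow> z \<notin> \<int>\<^sub>\<le>\<^sub>0 \<Longrightarrow> Gamma w = z * Gamma z"
  using Gamma_plus1[of z] by simp

lemma not_nonpos_Int_add_of_nat: "z \<notin> \<int>\<^sub>\<le>\<^sub>0 \<Longrightarrow> z + of_nat m \<notin> (\<int>\<^sub>\<le>\<^sub>0 :: 'a :: ring_1 set)"
  using nonpos_Ints_diff_Nats[of "z + of_nat m" "of_nat m"] by auto

text \<open>The six Gamma factors of the denominator of \<open>F0\<close> not involving \<open>k\<close> are advanced by one; \<open>F0\<close>
  and the WZ mates of its unit shifts are then polynomial multiples of this term.\<close>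
definition F0_core :: "complex \<Rightarrow> complex \<Rightarrow> complex \<Rightarrow> complex \<Rightarrow> complex \<Rightarrow> complex" where
  "F0_core k a b c d =
     Gamma (a + k) * Gamma (b + k) * Gamma (c + k) * Gamma (a + b + c - 3*d + 3/2)
     * rGamma (2*d - a + k) * rGamma (2*d - b + k) * rGamma (2*d - c + k)
     * rGamma (a + b - 2*d + 2) * rGamma (a + c - 2*d + 2) * rGamma (b + c - 2*d + 2)
     * rGamma (a - d + 3/2) * rGamma (b - d + 3/2) * rGamma (c - d + 3/2) * neg1pow (a + b + c + d)"

definition F0_poly :: "complex \<Rightarrow> complex \<Rightarrow> complex \<Rightarrow> complex \<Rightarrow> complex" where
  "F0_poly a b c d =
     (a + b - 2*d + 1) * (a + c - 2*d + 1) * (b + c - 2*d + 1) * (a - d + 1/2) * (b - d + 1/2) * (c - d + 1/2)"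

definition mate_poly :: "complex \<Rightarrow> complex \<Rightarrow> complex \<Rightarrow> complex \<Rightarrow> complex \<Rightarrow> complex" where
  "mate_poly k a b c d = - 1/2 *
     ((2*d - a + k - 1) * (2*d - b + k - 1) * (2*d - c + k - 1) * (b + c - 2*d + 1) * (b - d + 1/2) * (c - d + 1/2))"

lemma F0_eq_poly_core: "F0 k a b c d = F0_poly a b c d * F0_core k a b c d"
proof -
  have div3: "x / (Gamma p * Gamma q * Gamma r) = x * rGamma p * rGamma q * rGamma r" for x p q r
    by (simp add: divide_inverse rGamma_inverse_Gamma mult.assoc)
  have "rGamma (a + b - 2*d + 1) = (a + b - 2*d + 1) * rGamma (a + b - 2*d + 2)"
       "rGamma (a + c - 2*d + 1) = (a + c - 2*d + 1) * rGamma (a + c - 2*d + 2)"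
       "rGamma (b + c - 2*d + 1) = (b + c - 2*d + 1) * rGamma (b + c - 2*d + 2)"
       "rGamma (a - d + 1/2) = (a - d + 1/2) * rGamma (a - d + 3/2)"
       "rGamma (b - d + 1/2) = (b - d + 1/2) * rGamma (b - d + 3/2)"
       "rGamma (c - d + 1/2) = (c - d + 1/2) * rGamma (c - d + 3/2)"
    by (rule rGamma_eq_mult_rGamma_succ, simp)+
  then show ?thesis unfolding F0_def F0_core_def F0_poly_def div3 by (simp only: mult_ac)
qed

lemma F0_swap_ab: "F0 k b a c d = F0 k a b c d"
  by (simp add: F0_def ac_simps)

lemma F0_swap_ac: "F0 k c b a d = F0 k a b c d"
  by (simp add: F0_def ac_simps)

lemma F0_core_swap_ab: "F0_core k b a c d = F0_core k a b c d"
  by (simp add: F0_core_def ac_simps)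

lemma F0_core_swap_ac: "F0_core k c b a d = F0_core k a b c d"
  by (simp add: F0_core_def ac_simps)

lemma F0_defined_swap_ab: "F0_defined k b a c d \<longleftrightarrow> F0_defined k a b c d"
  by (auto simp: F0_defined_def ac_simps)

lemma F0_defined_swap_ac: "F0_defined k c b a d \<longleftrightarrow> F0_defined k a b c d"
  by (auto simp: F0_defined_def ac_simps)

lemma F0_defined_mono:
  assumes "F0_defined k a b c d"
  shows "F0_defined (k + of_nat i) (a + of_nat ja) (b + of_nat jb) (c + of_nat jc) d"
proof -
  have eqs: "a + of_nat ja + (k + of_nat i) = (a + k) + of_nat (ja + i)"
       "b + of_nat jb + (k + of_nat i) = (b + k) + of_nat (jb + i)"
       "c + of_nat jc + (k + of_nat i) = (c + k) + of_nat (jc + i)"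
       "a + of_nat ja + (b + of_nat jb) + (c + of_nat jc) - 3*d + 3/2
          = (a + b + c - 3*d + 3/2) + of_nat (ja + jb + jc)"
    by (simp_all add: algebra_simps)
  show ?thesis
    unfolding F0_defined_def eqs
    by (intro conjI not_nonpos_Int_add_of_nat) (use assms in \<open>simp_all add: F0_defined_def\<close>)
qed

lemma F0_core_shift_k:
  assumes "a + k \<notin> \<int>\<^sub>\<le>\<^sub>0" "b + k \<notin> \<int>\<^sub>\<le>\<^sub>0" "c + k \<notin> \<int>\<^sub>\<le>\<^sub>0"
  shows "(2*d - a + k) * (2*d - b + k) * (2*d - c + k) * F0_core (k + 1) a b c d
       = (a + k) * (b + k) * (c + k) * F0_core k a b c d"
proof -
  have "Gamma (a + (k + 1)) = (a + k) * Gamma (a + k)"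
       "Gamma (b + (k + 1)) = (b + k) * Gamma (b + k)"
       "Gamma (c + (k + 1)) = (c + k) * Gamma (c + k)"
    by (rule Gamma_succ_eq_mult_Gamma; simp add: assms)+
  moreover have "rGamma (2*d - a + k) = (2*d - a + k) * rGamma (2*d - a + (k + 1))"
       "rGamma (2*d - b + k) = (2*d - b + k) * rGamma (2*d - b + (k + 1))"
       "rGamma (2*d - c + k) = (2*d - c + k) * rGamma (2*d - c + (k + 1))"
    by (rule rGamma_eq_mult_rGamma_succ, simp)+
  ultimately show ?thesis unfolding F0_core_def by (simp only: mult_ac)
qed

lemma F0_core_shift_a:
  assumes "a + k \<notin> \<int>\<^sub>\<le>\<^sub>0" "a + b + c - 3*d + 3/2 \<notin> \<int>\<^sub>\<le>\<^sub>0"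
  shows "(a + b - 2*d + 2) * (a + c - 2*d + 2) * (a - d + 3/2) * F0_core k (a + 1) b c d
       = - ((a + k) * (a + b + c - 3*d + 3/2) * (2*d - (a + 1) + k)) * F0_core k a b c d"
proof -
  have "Gamma (a + 1 + k) = (a + k) * Gamma (a + k)"
       "Gamma (a + 1 + b + c - 3*d + 3/2) = (a + b + c - 3*d + 3/2) * Gamma (a + b + c - 3*d + 3/2)"
    by (rule Gamma_succ_eq_mult_Gamma; simp add: assms)+
  moreover have "rGamma (2*d - (a + 1) + k) = (2*d - (a + 1) + k) * rGamma (2*d - a + k)"
    by (rule rGamma_eq_mult_rGamma_succ) simp
  moreover have "rGamma (a + b - 2*d + 2) = (a + b - 2*d + 2) * rGamma (a + 1 + b - 2*d + 2)"
       "rGamma (a + c - 2*d + 2) = (a + c - 2*d + 2) * rGamma (a + 1 + c - 2*d + 2)"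
       "rGamma (a - d + 3/2) = (a - d + 3/2) * rGamma (a + 1 - d + 3/2)"
    by (rule rGamma_eq_mult_rGamma_succ, simp)+
  moreover have "neg1pow (a + 1 + b + c + d) = - neg1pow (a + b + c + d)"
    using neg1pow_plus1[of "a + b + c + d"] by (simp add: ac_simps)
  ultimately show ?thesis unfolding F0_core_def by (simp only: mult_ac mult_minus_left mult_minus_right)
qed

lemma WZ_step_a_certificate:
  fixes a b c d k :: complex
  shows "(a + k) * (a + b + c - 3*d + 3/2) * (2*d - (a + 1) + k) + (a + b - 2*d + 1) * (a + c - 2*d + 1) * (a - d + 1/2)
       = ((a + k) * (b + k) * (c + k) - (2*d - a + k - 1) * (2*d - b + k - 1) * (2*d - c + k - 1)) / 2"
  by (simp add: field_simps)

lemma WZ_step_a: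
  assumes "F0_defined k a b c d"
  shows "F0 k (a + 1) b c d - F0 k a b c d
       = mate_poly (k + 1) a b c d * F0_core (k + 1) a b c d - mate_poly k a b c d * F0_core k a b c d"
proof -
  have np: "a + k \<notin> \<int>\<^sub>\<le>\<^sub>0" "b + k \<notin> \<int>\<^sub>\<le>\<^sub>0" "c + k \<notin> \<int>\<^sub>\<le>\<^sub>0" "a + b + c - 3*d + 3/2 \<notin> \<int>\<^sub>\<le>\<^sub>0"
    using assms unfolding F0_defined_def by auto
  define M where "M = F0_core k a b c d"
  define C where "C = (b + c - 2*d + 1) * (b - d + 1/2) * (c - d + 1/2)"
  define E where "E = (a + b - 2*d + 2) * (a + c - 2*d + 2) * (a - d + 3/2)"
  define E0 where "E0 = (a + b - 2*d + 1) * (a + c - 2*d + 1) * (a - d + 1/2)"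
  define T where "T = (2*d - a + k) * (2*d - b + k) * (2*d - c + k)"
  define U where "U = (2*d - a + k - 1) * (2*d - b + k - 1) * (2*d - c + k - 1)"
  define V where "V = (a + k) * (b + k) * (c + k)"
  define R where "R = (a + k) * (a + b + c - 3*d + 3/2) * (2*d - (a + 1) + k)"
  have step_a: "E * F0_core k (a + 1) b c d = - R * M"
    unfolding E_def R_def M_def using F0_core_shift_a[OF np(1,4)] .
  have step_k: "T * F0_core (k + 1) a b c d = V * M"
    unfolding T_def V_def M_def using F0_core_shift_k[OF np(1-3)] .
  have cert: "R + E0 = (V - U) / 2"
    unfolding R_def E0_def V_def U_def by (rule WZ_step_a_certificate)
  have "a + 1 + b - 2*d + 1 = a + b - 2*d + 2" "a + 1 + c - 2*d + 1 = a + c - 2*d + 2"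
       "a + 1 - d + 1/2 = a - d + 3/2"
    by simp_all
  then have poly_a: "F0_poly (a + 1) b c d = C * E" "F0_poly a b c d = C * E0"
    unfolding F0_poly_def C_def E_def E0_def by (simp_all only: mult_ac)
  have "2*d - a + (k + 1) - 1 = 2*d - a + k" "2*d - b + (k + 1) - 1 = 2*d - b + k"
       "2*d - c + (k + 1) - 1 = 2*d - c + k"
    by simp_all
  then have poly_k: "mate_poly (k + 1) a b c d = - 1/2 * (T * C)" "mate_poly k a b c d = - 1/2 * (U * C)"
    unfolding mate_poly_def C_def T_def U_def by (simp_all only: mult_ac)
  have "F0 k (a + 1) b c d - F0 k a b c d = C * (E * F0_core k (a + 1) b c d) - C * E0 * M"
    unfolding F0_eq_poly_core M_def poly_a by (simp only: mult.assoc)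
  also have "\<dots> = - C * M * (R + E0)"
    unfolding step_a by (simp add: algebra_simps)
  also have "\<dots> = - 1/2 * C * (T * F0_core (k + 1) a b c d) + 1/2 * U * C * M"
    unfolding cert step_k by (simp add: field_simps)
  also have "\<dots> = mate_poly (k + 1) a b c d * F0_core (k + 1) a b c d - mate_poly k a b c d * M"
    unfolding poly_k by (simp add: algebra_simps)
  finally show ?thesis unfolding M_def .
qed

lemma WZ_step_b:
  "F0_defined k a b c d \<Longrightarrow> F0 k a (b + 1) c d - F0 k a b c d
     = mate_poly (k + 1) b a c d * F0_core (k + 1) a b c d - mate_poly k b a c d * F0_core k a b c d"
  using WZ_step_a[of k b a c d] by (simp add: F0_defined_swap_ab F0_swap_ab F0_core_swap_ab)

lemma WZ_step_c:
  "F0_defined k a b c d \<Longrightarrow> F0 k a b (c + 1) d - F0 k a b c d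
     = mate_poly (k + 1) c b a d * F0_core (k + 1) a b c d - mate_poly k c b a d * F0_core k a b c d"
  using WZ_step_a[of k c b a d] by (simp add: F0_defined_swap_ac F0_swap_ac F0_core_swap_ac)

section \<open>Mates along lattice paths\<close>

lemma telescoping_difference:
  fixes u :: "nat \<Rightarrow> 'a::ab_group_add"
  assumes "\<And>j. j < n \<Longrightarrow> u (Suc j) - u j = v' j - v j"
  shows "u n - u 0 = (\<Sum>j<n. v' j) - (\<Sum>j<n. v j)"
proof -
  have "u n - u 0 = (\<Sum>j<n. u (Suc j) - u j)" by (simp add: sum_lessThan_telescope)
  also have "\<dots> = (\<Sum>j<n. v' j - v j)" using assms by simp
  finally show ?thesis by (simp add: sum_subtractf)
qed

text \<open>The weighted sum along the lattice path from \<open>(k, a, b, c)\<close> that takes \<open>\<kappa>\<close> unit steps in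
  \<open>k\<close>, then \<open>\<alpha>\<close> in \<open>a\<close>, \<open>\<beta>\<close> in \<open>b\<close> and \<open>\<gamma>\<close> in \<open>c\<close>, each step weighted by the polynomial of its WZ mate.
  With the weights \<open>F0_core\<close> at the path points it is the mate of the total shift; leaving
  them abstract lets the same sum express that mate as a polynomial multiple of one term.\<close>
definition walk_sum ::
  "(nat \<Rightarrow> nat \<Rightarrow> nat \<Rightarrow> nat \<Rightarrow> complex) \<Rightarrow> nat \<Rightarrow> nat \<Rightarrow> nat \<Rightarrow> nat \<Rightarrow>
     complex \<Rightarrow> complex \<Rightarrow> complex \<Rightarrow> complex \<Rightarrow> complex \<Rightarrow> complex" where
  "walk_sum w \<kappa> \<alpha> \<beta> \<gamma> k a b c d =
     (\<Sum>j<\<kappa>. F0_poly a b c d * w j 0 0 0)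
   + (\<Sum>j<\<alpha>. mate_poly (k + of_nat \<kappa>) (a + of_nat j) b c d * w \<kappa> j 0 0)
   + (\<Sum>j<\<beta>. mate_poly (k + of_nat \<kappa>) (b + of_nat j) (a + of_nat \<alpha>) c d * w \<kappa> \<alpha> j 0)
   + (\<Sum>j<\<gamma>. mate_poly (k + of_nat \<kappa>) (c + of_nat j) (b + of_nat \<beta>) (a + of_nat \<alpha>) d * w \<kappa> \<alpha> \<beta> j)"

definition path_mate ::
  "nat \<Rightarrow> nat \<Rightarrow> nat \<Rightarrow> nat \<Rightarrow> complex \<Rightarrow> complex \<Rightarrow> complex \<Rightarrow> complex \<Rightarrow> complex \<Rightarrow> complex" where
  "path_mate \<kappa> \<alpha> \<beta> \<gamma> k a b c d =
     walk_sum (\<lambda>i ja jb jc. F0_core (k + of_nat i) (a + of_nat ja) (b + of_nat jb) (c + of_nat jc) d)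
       \<kappa> \<alpha> \<beta> \<gamma> k a b c d"

lemma F0_diff_path_mate:
  assumes "F0_defined k a b c d"
  shows "F0 (k + of_nat \<kappa>) (a + of_nat \<alpha>) (b + of_nat \<beta>) (c + of_nat \<gamma>) d - F0 k a b c d
       = path_mate \<kappa> \<alpha> \<beta> \<gamma> (k + 1) a b c d - path_mate \<kappa> \<alpha> \<beta> \<gamma> k a b c d"
proof -
  let ?k = "k + of_nat \<kappa>" and ?a = "a + of_nat \<alpha>" and ?b = "b + of_nat \<beta>"
  have defined: "F0_defined (k + of_nat i) (a + of_nat ja) (b + of_nat jb) (c + of_nat jc) d" for i ja jb jc
    using F0_defined_mono[OF assms] .
  have k_leg: "F0 (k + of_nat \<kappa>) a b c d - F0 (k + of_nat 0) a b c d
      = (\<Sum>j<\<kappa>. F0_poly a b c d * F0_core (k + 1 + of_nat j) a b c d)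
      - (\<Sum>j<\<kappa>. F0_poly a b c d * F0_core (k + of_nat j) a b c d)"
    by (rule telescoping_difference) (simp add: F0_eq_poly_core add_ac)
  have a_leg: "F0 ?k (a + of_nat \<alpha>) b c d - F0 ?k (a + of_nat 0) b c d
      = (\<Sum>j<\<alpha>. mate_poly (k + 1 + of_nat \<kappa>) (a + of_nat j) b c d * F0_core (k + 1 + of_nat \<kappa>) (a + of_nat j) b c d)
      - (\<Sum>j<\<alpha>. mate_poly ?k (a + of_nat j) b c d * F0_core ?k (a + of_nat j) b c d)"
    by (rule telescoping_difference)
      (use WZ_step_a[OF defined[of \<kappa> _ 0 0, simplified]] in \<open>simp add: add_ac\<close>)
  have b_leg: "F0 ?k ?a (b + of_nat \<beta>) c d - F0 ?k ?a (b + of_nat 0) c d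
      = (\<Sum>j<\<beta>. mate_poly (k + 1 + of_nat \<kappa>) (b + of_nat j) ?a c d * F0_core (k + 1 + of_nat \<kappa>) ?a (b + of_nat j) c d)
      - (\<Sum>j<\<beta>. mate_poly ?k (b + of_nat j) ?a c d * F0_core ?k ?a (b + of_nat j) c d)"
    by (rule telescoping_difference)
      (use WZ_step_b[OF defined[of \<kappa> \<alpha> _ 0, simplified]] in \<open>simp add: add_ac\<close>)
  have c_leg: "F0 ?k ?a ?b (c + of_nat \<gamma>) d - F0 ?k ?a ?b (c + of_nat 0) d
      = (\<Sum>j<\<gamma>. mate_poly (k + 1 + of_nat \<kappa>) (c + of_nat j) ?b ?a d * F0_core (k + 1 + of_nat \<kappa>) ?a ?b (c + of_nat j) d)
      - (\<Sum>j<\<gamma>. mate_poly ?k (c + of_nat j) ?b ?a d * F0_core ?k ?a ?b (c + of_nat j) d)"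
    by (rule telescoping_difference)
      (use WZ_step_c[OF defined[of \<kappa> \<alpha> \<beta>], simplified] in \<open>simp add: add_ac\<close>)
  have "F0 ?k ?a ?b (c + of_nat \<gamma>) d - F0 k a b c d
      = (F0 ?k ?a ?b (c + of_nat \<gamma>) d - F0 ?k ?a ?b (c + of_nat 0) d)
      + (F0 ?k ?a (b + of_nat \<beta>) c d - F0 ?k ?a (b + of_nat 0) c d)
      + (F0 ?k (a + of_nat \<alpha>) b c d - F0 ?k (a + of_nat 0) b c d)
      + (F0 (k + of_nat \<kappa>) a b c d - F0 (k + of_nat 0) a b c d)"
    by simp
  also have "\<dots> = path_mate \<kappa> \<alpha> \<beta> \<gamma> (k + 1) a b c d - path_mate \<kappa> \<alpha> \<beta> \<gamma> k a b c d"
    unfolding k_leg a_leg b_leg c_leg path_mate_def walk_sum_def by (simp add: algebra_simps)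
  finally show ?thesis .
qed

text \<open>Both \<open>x\<close> and \<open>x + (K, A, B, C)\<close> are joined by such paths to the point whose offsets are
  the positive parts of \<open>K, A, B, C\<close>.\<close>
definition lattice_mate ::
  "int \<Rightarrow> int \<Rightarrow> int \<Rightarrow> int \<Rightarrow> complex \<Rightarrow> complex \<Rightarrow> complex \<Rightarrow> complex \<Rightarrow> complex \<Rightarrow> complex" where
  "lattice_mate K A B C k a b c d =
     path_mate (nat K) (nat A) (nat B) (nat C) k a b c d
   - path_mate (nat (- K)) (nat (- A)) (nat (- B)) (nat (- C))
       (k + of_int K) (a + of_int A) (b + of_int B) (c + of_int C) d"

lemma F0_diff_lattice_mate:
  assumes "F0_defined k a b c d"
    and "F0_defined (k + of_int K) (a + of_int A) (b + of_int B) (c + of_int C) d"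
  shows "F0 (k + of_int K) (a + of_int A) (b + of_int B) (c + of_int C) d - F0 k a b c d
       = lattice_mate K A B C (k + 1) a b c d - lattice_mate K A B C k a b c d"
proof -
  have "of_int M + of_nat (nat (- M)) = (of_nat (nat M) :: complex)" for M
    by (cases "M \<ge> 0") simp_all
  then have top: "F0 (k + of_int K + of_nat (nat (- K))) (a + of_int A + of_nat (nat (- A)))
                   (b + of_int B + of_nat (nat (- B))) (c + of_int C + of_nat (nat (- C))) d
      = F0 (k + of_nat (nat K)) (a + of_nat (nat A)) (b + of_nat (nat B)) (c + of_nat (nat C)) d"
    by (simp only: add.assoc)
  let ?X = "F0 (k + of_nat (nat K)) (a + of_nat (nat A)) (b + of_nat (nat B)) (c + of_nat (nat C)) d"
  have "F0 (k + of_int K) (a + of_int A) (b + of_int B) (c + of_int C) d - F0 k a b c d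
      = (?X - F0 k a b c d) - (?X - F0 (k + of_int K) (a + of_int A) (b + of_int B) (c + of_int C) d)"
    by simp
  also have "\<dots> = lattice_mate K A B C (k + 1) a b c d - lattice_mate K A B C k a b c d"
    unfolding F0_diff_path_mate[OF assms(1)]
      F0_diff_path_mate[OF assms(2), of "nat (- K)" "nat (- A)" "nat (- B)" "nat (- C)", unfolded top]
      lattice_mate_def
    by (simp add: algebra_simps)
  finally show ?thesis .
qed

section \<open>The mate as a polynomial times a hypergeometric term\<close>

lemma Gamma_eq_pochhammer_mult_Gamma:
  fixes z :: complex
  assumes "z \<notin> \<int>\<^sub>\<le>\<^sub>0" "l \<le> s" "w = z + of_int (s - l)"
  shows "Gamma w = pochhammer z (nat (s - l)) * Gamma z"
proof -
  have "w = z + of_nat (nat (s - l))" using assms(2,3) by simp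
  moreover have "Gamma z \<noteq> 0" using assms(1) by (simp add: Gamma_eq_zero_iff)
  ultimately show ?thesis using pochhammer_Gamma[OF assms(1), of "nat (s - l)"] by simp
qed

lemma rGamma_eq_pochhammer_mult_rGamma:
  assumes "t \<le> L" "w = z + of_int (L - t)"
  shows "rGamma z = pochhammer z (nat (L - t)) * rGamma w"
proof -
  have "w = z + of_nat (nat (L - t))" using assms by simp
  then show ?thesis by (simp add: pochhammer_rGamma[of z])
qed

text \<open>The Gamma arguments of \<open>F0_core\<close> lowered by \<open>ox, oy, oz, os\<close> and the reciprocal Gamma
  arguments raised by \<open>L\<close>, so that \<open>F0_core\<close> at any lattice point in between differs from this
  term by a product of Pochhammer symbols.\<close>
definition base_core ::
  "int \<Rightarrow> int \<Rightarrow> int \<Rightarrow> int \<Rightarrow> int \<Rightarrow> complex \<Rightarrow> complex \<Rightarrow> complex \<Rightarrow> complex \<Rightarrow> complex \<Rightarrow> complex" where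
  "base_core ox oy oz os L k a b c d =
     Gamma (a + k + of_int ox) * Gamma (b + k + of_int oy) * Gamma (c + k + of_int oz)
     * Gamma (a + b + c - 3*d + 3/2 + of_int os)
     * rGamma (2*d - a + k + of_int L) * rGamma (2*d - b + k + of_int L) * rGamma (2*d - c + k + of_int L)
     * rGamma (a + b - 2*d + 2 + of_int L) * rGamma (a + c - 2*d + 2 + of_int L)
     * rGamma (b + c - 2*d + 2 + of_int L)
     * rGamma (a - d + 3/2 + of_int L) * rGamma (b - d + 3/2 + of_int L) * rGamma (c - d + 3/2 + of_int L)
     * neg1pow (a + b + c + d)"

definition core_cofactor ::
  "int \<Rightarrow> int \<Rightarrow> int \<Rightarrow> int \<Rightarrow> int \<Rightarrow> int \<Rightarrow> int \<Rightarrow> int \<Rightarrow> int \<Rightarrow>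
     complex \<Rightarrow> complex \<Rightarrow> complex \<Rightarrow> complex \<Rightarrow> complex \<Rightarrow> complex" where
  "core_cofactor ox oy oz os L i ja jb jc k a b c d =
     (let k' = k + of_int i; a' = a + of_int ja; b' = b + of_int jb; c' = c + of_int jc in
      pochhammer (a + k + of_int ox) (nat (i + ja - ox)) * pochhammer (b + k + of_int oy) (nat (i + jb - oy))
      * pochhammer (c + k + of_int oz) (nat (i + jc - oz))
      * pochhammer (a + b + c - 3*d + 3/2 + of_int os) (nat (ja + jb + jc - os))
      * pochhammer (2*d - a' + k') (nat (L - (i - ja))) * pochhammer (2*d - b' + k') (nat (L - (i - jb)))
      * pochhammer (2*d - c' + k') (nat (L - (i - jc)))
      * pochhammer (a' + b' - 2*d + 2) (nat (L - (ja + jb))) * pochhammer (a' + c' - 2*d + 2) (nat (L - (ja + jc)))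
      * pochhammer (b' + c' - 2*d + 2) (nat (L - (jb + jc)))
      * pochhammer (a' - d + 3/2) (nat (L - ja)) * pochhammer (b' - d + 3/2) (nat (L - jb))
      * pochhammer (c' - d + 3/2) (nat (L - jc)) * neg1pow (of_int (ja + jb + jc)))"

lemma F0_core_eq_cofactor_mult_base:
  assumes np: "a + k + of_int ox \<notin> \<int>\<^sub>\<le>\<^sub>0" "b + k + of_int oy \<notin> \<int>\<^sub>\<le>\<^sub>0" "c + k + of_int oz \<notin> \<int>\<^sub>\<le>\<^sub>0"
      "a + b + c - 3*d + 3/2 + of_int os \<notin> \<int>\<^sub>\<le>\<^sub>0"
    and lo: "ox \<le> i + ja" "oy \<le> i + jb" "oz \<le> i + jc" "os \<le> ja + jb + jc"
    and hi: "i - ja \<le> L" "i - jb \<le> L" "i - jc \<le> L" "ja + jb \<le> L" "ja + jc \<le> L" "jb + jc \<le> L"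
      "ja \<le> L" "jb \<le> L" "jc \<le> L"
  shows "F0_core (k + of_int i) (a + of_int ja) (b + of_int jb) (c + of_int jc) d
       = core_cofactor ox oy oz os L i ja jb jc k a b c d * base_core ox oy oz os L k a b c d"
proof -
  let ?k = "k + of_int i" and ?a = "a + of_int ja" and ?b = "b + of_int jb" and ?c = "c + of_int jc"
  have "Gamma (?a + ?k) = pochhammer (a + k + of_int ox) (nat (i + ja - ox)) * Gamma (a + k + of_int ox)"
    by (rule Gamma_eq_pochhammer_mult_Gamma[OF np(1) lo(1)]) (simp add: algebra_simps)
  moreover have "Gamma (?b + ?k) = pochhammer (b + k + of_int oy) (nat (i + jb - oy)) * Gamma (b + k + of_int oy)"
    by (rule Gamma_eq_pochhammer_mult_Gamma[OF np(2) lo(2)]) (simp add: algebra_simps)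
  moreover have "Gamma (?c + ?k) = pochhammer (c + k + of_int oz) (nat (i + jc - oz)) * Gamma (c + k + of_int oz)"
    by (rule Gamma_eq_pochhammer_mult_Gamma[OF np(3) lo(3)]) (simp add: algebra_simps)
  moreover have "Gamma (?a + ?b + ?c - 3*d + 3/2)
      = pochhammer (a + b + c - 3*d + 3/2 + of_int os) (nat (ja + jb + jc - os))
        * Gamma (a + b + c - 3*d + 3/2 + of_int os)"
    by (rule Gamma_eq_pochhammer_mult_Gamma[OF np(4) lo(4)]) (simp add: algebra_simps)
  moreover have
    "rGamma (2*d - ?a + ?k) = pochhammer (2*d - ?a + ?k) (nat (L - (i - ja))) * rGamma (2*d - a + k + of_int L)"
    "rGamma (2*d - ?b + ?k) = pochhammer (2*d - ?b + ?k) (nat (L - (i - jb))) * rGamma (2*d - b + k + of_int L)"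
    "rGamma (2*d - ?c + ?k) = pochhammer (2*d - ?c + ?k) (nat (L - (i - jc))) * rGamma (2*d - c + k + of_int L)"
    "rGamma (?a + ?b - 2*d + 2) = pochhammer (?a + ?b - 2*d + 2) (nat (L - (ja + jb))) * rGamma (a + b - 2*d + 2 + of_int L)"
    "rGamma (?a + ?c - 2*d + 2) = pochhammer (?a + ?c - 2*d + 2) (nat (L - (ja + jc))) * rGamma (a + c - 2*d + 2 + of_int L)"
    "rGamma (?b + ?c - 2*d + 2) = pochhammer (?b + ?c - 2*d + 2) (nat (L - (jb + jc))) * rGamma (b + c - 2*d + 2 + of_int L)"
    "rGamma (?a - d + 3/2) = pochhammer (?a - d + 3/2) (nat (L - ja)) * rGamma (a - d + 3/2 + of_int L)"
    "rGamma (?b - d + 3/2) = pochhammer (?b - d + 3/2) (nat (L - jb)) * rGamma (b - d + 3/2 + of_int L)"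
    "rGamma (?c - d + 3/2) = pochhammer (?c - d + 3/2) (nat (L - jc)) * rGamma (c - d + 3/2 + of_int L)"
    by (rule rGamma_eq_pochhammer_mult_rGamma, use hi in linarith, simp add: algebra_simps)+
  moreover have "neg1pow (?a + ?b + ?c + d) = neg1pow (of_int (ja + jb + jc)) * neg1pow (a + b + c + d)"
    by (simp add: neg1pow_add[symmetric] algebra_simps)
  ultimately show ?thesis
    unfolding F0_core_def core_cofactor_def base_core_def Let_def by (simp only: mult_ac)
qed

lemma walk_sum_factor:
  assumes "\<And>i ja jb jc. i \<le> \<kappa> \<Longrightarrow> ja \<le> \<alpha> \<Longrightarrow> jb \<le> \<beta> \<Longrightarrow> jc \<le> \<gamma> \<Longrightarrow> w i ja jb jc = w' i ja jb jc * z"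
  shows "walk_sum w \<kappa> \<alpha> \<beta> \<gamma> k a b c d = walk_sum w' \<kappa> \<alpha> \<beta> \<gamma> k a b c d * z"
  unfolding walk_sum_def by (simp add: assms distrib_right sum_distrib_right mult.assoc)

text \<open>Along both paths of \<open>lattice_mate\<close>, \<open>min 0 (K + A)\<close> is the least shift of \<open>a + k\<close> (similarly
  for \<open>b + k\<close>, \<open>c + k\<close> and \<open>a + b + c\<close>), and no reciprocal Gamma argument is shifted by more than
  \<open>|K| + |A| + |B| + |C|\<close>.\<close>
definition lattice_base ::
  "int \<Rightarrow> int \<Rightarrow> int \<Rightarrow> int \<Rightarrow> complex \<Rightarrow> complex \<Rightarrow> complex \<Rightarrow> complex \<Rightarrow> complex \<Rightarrow> complex" where
  "lattice_base K A B C =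
     base_core (min 0 (K + A)) (min 0 (K + B)) (min 0 (K + C)) (min 0 (A + B + C)) (\<bar>K\<bar> + \<bar>A\<bar> + \<bar>B\<bar> + \<bar>C\<bar>)"

definition lattice_cofactor ::
  "int \<Rightarrow> int \<Rightarrow> int \<Rightarrow> int \<Rightarrow> complex \<Rightarrow> complex \<Rightarrow> complex \<Rightarrow> complex \<Rightarrow> complex \<Rightarrow> complex" where
  "lattice_cofactor K A B C k a b c d =
     (let cof = core_cofactor (min 0 (K + A)) (min 0 (K + B)) (min 0 (K + C)) (min 0 (A + B + C))
                  (\<bar>K\<bar> + \<bar>A\<bar> + \<bar>B\<bar> + \<bar>C\<bar>) in
      walk_sum (\<lambda>i ja jb jc. cof (int i) (int ja) (int jb) (int jc) k a b c d)
        (nat K) (nat A) (nat B) (nat C) k a b c d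
    - walk_sum (\<lambda>i ja jb jc. cof (K + int i) (A + int ja) (B + int jb) (C + int jc) k a b c d)
        (nat (- K)) (nat (- A)) (nat (- B)) (nat (- C))
        (k + of_int K) (a + of_int A) (b + of_int B) (c + of_int C) d)"

lemma lattice_mate_eq_cofactor_mult_base:
  assumes np: "a + k + of_int (min 0 (K + A)) \<notin> \<int>\<^sub>\<le>\<^sub>0" "b + k + of_int (min 0 (K + B)) \<notin> \<int>\<^sub>\<le>\<^sub>0"
      "c + k + of_int (min 0 (K + C)) \<notin> \<int>\<^sub>\<le>\<^sub>0" "a + b + c - 3*d + 3/2 + of_int (min 0 (A + B + C)) \<notin> \<int>\<^sub>\<le>\<^sub>0"
  shows "lattice_mate K A B C k a b c d = lattice_cofactor K A B C k a b c d * lattice_base K A B C k a b c d"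
proof -
  let ?cof = "core_cofactor (min 0 (K + A)) (min 0 (K + B)) (min 0 (K + C)) (min 0 (A + B + C))
                (\<bar>K\<bar> + \<bar>A\<bar> + \<bar>B\<bar> + \<bar>C\<bar>)"
    and ?base = "lattice_base K A B C k a b c d"
  note F0_core_eq = F0_core_eq_cofactor_mult_base[OF np, where L = "\<bar>K\<bar> + \<bar>A\<bar> + \<bar>B\<bar> + \<bar>C\<bar>",
      folded lattice_base_def]
  have "path_mate (nat K) (nat A) (nat B) (nat C) k a b c d
      = walk_sum (\<lambda>i ja jb jc. ?cof (int i) (int ja) (int jb) (int jc) k a b c d)
          (nat K) (nat A) (nat B) (nat C) k a b c d * ?base"
    unfolding path_mate_def
  proof (rule walk_sum_factor)
    fix i ja jb jc assume "i \<le> nat K" "ja \<le> nat A" "jb \<le> nat B" "jc \<le> nat C"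
    then have "F0_core (k + of_int (int i)) (a + of_int (int ja)) (b + of_int (int jb)) (c + of_int (int jc)) d
        = ?cof (int i) (int ja) (int jb) (int jc) k a b c d * ?base"
      by (intro F0_core_eq) linarith+
    then show "F0_core (k + of_nat i) (a + of_nat ja) (b + of_nat jb) (c + of_nat jc) d
        = ?cof (int i) (int ja) (int jb) (int jc) k a b c d * ?base"
      by simp
  qed
  moreover have "path_mate (nat (- K)) (nat (- A)) (nat (- B)) (nat (- C))
        (k + of_int K) (a + of_int A) (b + of_int B) (c + of_int C) d
      = walk_sum (\<lambda>i ja jb jc. ?cof (K + int i) (A + int ja) (B + int jb) (C + int jc) k a b c d)
          (nat (- K)) (nat (- A)) (nat (- B)) (nat (- C))
          (k + of_int K) (a + of_int A) (b + of_int B) (c + of_int C) d * ?base"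
    unfolding path_mate_def
  proof (rule walk_sum_factor)
    fix i ja jb jc assume "i \<le> nat (- K)" "ja \<le> nat (- A)" "jb \<le> nat (- B)" "jc \<le> nat (- C)"
    then have "F0_core (k + of_int (K + int i)) (a + of_int (A + int ja)) (b + of_int (B + int jb))
          (c + of_int (C + int jc)) d = ?cof (K + int i) (A + int ja) (B + int jb) (C + int jc) k a b c d * ?base"
      by (intro F0_core_eq) linarith+
    then show "F0_core (k + of_int K + of_nat i) (a + of_int A + of_nat ja) (b + of_int B + of_nat jb)
          (c + of_int C + of_nat jc) d = ?cof (K + int i) (A + int ja) (B + int jb) (C + int jc) k a b c d * ?base"
      by (simp add: add.assoc)
  qed
  ultimately show ?thesis
    unfolding lattice_mate_def lattice_cofactor_def Let_def by (simp add: left_diff_distrib)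
qed

lemma not_nonpos_Int_add_min: "z \<notin> \<int>\<^sub>\<le>\<^sub>0 \<Longrightarrow> z + of_int s \<notin> \<int>\<^sub>\<le>\<^sub>0 \<Longrightarrow> z + of_int (min 0 s) \<notin> \<int>\<^sub>\<le>\<^sub>0"
  by (cases "0 \<le> s") simp_all

lemma lattice_base_args_not_nonpos_Int:
  assumes "F0_defined k a b c d" "F0_defined (k + of_int K) (a + of_int A) (b + of_int B) (c + of_int C) d"
  shows "a + k + of_int (min 0 (K + A)) \<notin> \<int>\<^sub>\<le>\<^sub>0" "b + k + of_int (min 0 (K + B)) \<notin> \<int>\<^sub>\<le>\<^sub>0"
    "c + k + of_int (min 0 (K + C)) \<notin> \<int>\<^sub>\<le>\<^sub>0" "a + b + c - 3*d + 3/2 + of_int (min 0 (A + B + C)) \<notin> \<int>\<^sub>\<le>\<^sub>0"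
proof -
  have eqs: "a + of_int A + (k + of_int K) = a + k + of_int (K + A)"
       "b + of_int B + (k + of_int K) = b + k + of_int (K + B)"
       "c + of_int C + (k + of_int K) = c + k + of_int (K + C)"
       "a + of_int A + (b + of_int B) + (c + of_int C) - 3*d + 3/2 = a + b + c - 3*d + 3/2 + of_int (A + B + C)"
    by (simp_all add: algebra_simps)
  have x: "a + k \<notin> \<int>\<^sub>\<le>\<^sub>0" "b + k \<notin> \<int>\<^sub>\<le>\<^sub>0" "c + k \<notin> \<int>\<^sub>\<le>\<^sub>0" "a + b + c - 3*d + 3/2 \<notin> \<int>\<^sub>\<le>\<^sub>0"
    using assms(1) unfolding F0_defined_def by blast+
  have y: "a + k + of_int (K + A) \<notin> \<int>\<^sub>\<le>\<^sub>0" "b + k + of_int (K + B) \<notin> \<int>\<^sub>\<le>\<^sub>0"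
      "c + k + of_int (K + C) \<notin> \<int>\<^sub>\<le>\<^sub>0" "a + b + c - 3*d + 3/2 + of_int (A + B + C) \<notin> \<int>\<^sub>\<le>\<^sub>0"
    using assms(2) unfolding F0_defined_def eqs by blast+
  show "a + k + of_int (min 0 (K + A)) \<notin> \<int>\<^sub>\<le>\<^sub>0" by (rule not_nonpos_Int_add_min[OF x(1) y(1)])
  show "b + k + of_int (min 0 (K + B)) \<notin> \<int>\<^sub>\<le>\<^sub>0" by (rule not_nonpos_Int_add_min[OF x(2) y(2)])
  show "c + k + of_int (min 0 (K + C)) \<notin> \<int>\<^sub>\<le>\<^sub>0" by (rule not_nonpos_Int_add_min[OF x(3) y(3)])
  show "a + b + c - 3*d + 3/2 + of_int (min 0 (A + B + C)) \<notin> \<int>\<^sub>\<le>\<^sub>0"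
    by (rule not_nonpos_Int_add_min[OF x(4) y(4)])
qed

lemma F0_diff_lattice_cofactor_base:
  assumes "F0_defined k a b c d" "F0_defined (k + of_int K) (a + of_int A) (b + of_int B) (c + of_int C) d"
  shows "F0 (k + of_int K) (a + of_int A) (b + of_int B) (c + of_int C) d - F0 k a b c d
       = lattice_cofactor K A B C (k + 1) a b c d * lattice_base K A B C (k + 1) a b c d
       - lattice_cofactor K A B C k a b c d * lattice_base K A B C k a b c d"
proof -
  have "F0_defined (k + 1) a b c d" "F0_defined (k + 1 + of_int K) (a + of_int A) (b + of_int B) (c + of_int C) d"
    using F0_defined_mono[OF assms(1), of 1 0 0 0] F0_defined_mono[OF assms(2), of 1 0 0 0]
    by (simp_all add: add_ac)
  with assms show ?thesis
    by (simp add: F0_diff_lattice_mate lattice_mate_eq_cofactor_mult_base lattice_base_args_not_nonpos_Int)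
qed

lemma hypergeometric2_lattice_cofactor_base:
  assumes "affine_term kk" "affine_term aa" "affine_term bb" "affine_term cc"
  shows "hypergeometric2 (\<lambda>n k. lattice_cofactor K A B C (kk n k) (aa n k) (bb n k) (cc n k) d
                              * lattice_base K A B C (kk n k) (aa n k) (bb n k) (cc n k) d)"
proof (rule hypergeometric2_mult)
  have "poly_term (\<lambda>n k. lattice_cofactor K A B C (kk n k) (aa n k) (bb n k) (cc n k) d)"
    unfolding lattice_cofactor_def walk_sum_def core_cofactor_def F0_poly_def mate_poly_def Let_def
    using assms by (intro poly_term_diff poly_term_add poly_term_mult poly_term_sum poly_term_pochhammer
        poly_term_uminus poly_term_const poly_term_affine_term affine_term_add affine_term_diff
        affine_term_const)
  then show "hypergeometric2 (\<lambda>n k. lattice_cofactor K A B C (kk n k) (aa n k) (bb n k) (cc n k) d)"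
    by (rule hypergeometric2_poly_term)
  show "hypergeometric2 (\<lambda>n k. lattice_base K A B C (kk n k) (aa n k) (bb n k) (cc n k) d)"
    unfolding lattice_base_def base_core_def
    using assms by (intro hypergeometric2_mult hypergeometric2_Gamma_affine hypergeometric2_rGamma_affine
        hypergeometric2_neg1pow_affine affine_term_add affine_term_diff affine_term_const)
qed

lemma neg1pow_of_int_4: "neg1pow (of_int (4 * m)) = 1"
proof -
  have arg: "\<i> * complex_of_real pi * of_int (4 * m) = 4 * of_int m * complex_of_real pi * \<i>"
    by simp
  show ?thesis
    unfolding neg1pow_def arg using exp_integer_2pi[of "of_int (2 * m)"] by simp
qed

lemma F0_shift_diagonal:
  "F0 k (a + of_int m) (b + of_int m) (c + of_int m) (d + of_int m) = F0 (k + of_int m) a b c d"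
proof -
  have "a + of_int m + (b + of_int m) + (c + of_int m) + (d + of_int m) = a + b + c + d + of_int (4 * m)"
    by simp
  then have "neg1pow (a + of_int m + (b + of_int m) + (c + of_int m) + (d + of_int m)) = neg1pow (a + b + c + d)"
    by (simp only: neg1pow_add neg1pow_of_int_4 mult_1_right)
  then show ?thesis
    unfolding F0_def by (simp add: algebra_simps)
qed

lemma F0_defined_shift_diagonal:
  "F0_defined k (a + of_int m) (b + of_int m) (c + of_int m) (d + of_int m) \<longleftrightarrow> F0_defined (k + of_int m) a b c d"
  unfolding F0_defined_def by (simp add: algebra_simps)

lemma F0_diagonal_line:
  "F0 z (of_int A * of_int n + a) (of_int B * of_int n + b) (of_int C * of_int n + c) (of_int D * of_int n + d)
   = F0 (z + of_int D * of_int n) (of_int (A - D) * of_int n + a) (of_int (B - D) * of_int n + b)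
       (of_int (C - D) * of_int n + c) d"
  using F0_shift_diagonal[of z "of_int (A - D) * of_int n + a" "D * n" "of_int (B - D) * of_int n + b"
      "of_int (C - D) * of_int n + c" d]
  by (simp add: algebra_simps)

lemma F0_defined_diagonal_line:
  "F0_defined z (of_int A * of_int n + a) (of_int B * of_int n + b) (of_int C * of_int n + c)
     (of_int D * of_int n + d)
   \<longleftrightarrow> F0_defined (z + of_int D * of_int n) (of_int (A - D) * of_int n + a) (of_int (B - D) * of_int n + b)
       (of_int (C - D) * of_int n + c) d"
  using F0_defined_shift_diagonal[of z "of_int (A - D) * of_int n + a" "D * n" "of_int (B - D) * of_int n + b"
      "of_int (C - D) * of_int n + c" d]
  by (simp add: algebra_simps)

theorem theorem1:
  fixes K A B C D :: int and k0 a b c d :: complex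
  defines "F \<equiv> (\<lambda>n k :: int. F0 (of_int K * of_int n + k0 + of_int k)
                 (of_int A * of_int n + a) (of_int B * of_int n + b)
                 (of_int C * of_int n + c) (of_int D * of_int n + d))"
  defines "Fdef \<equiv> (\<lambda>n k :: int. F0_defined (of_int K * of_int n + k0 + of_int k)
                 (of_int A * of_int n + a) (of_int B * of_int n + b)
                 (of_int C * of_int n + c) (of_int D * of_int n + d))"
  shows "\<exists>G. hypergeometric2 G \<and>
           (\<forall>n k. Fdef n k \<and> Fdef (n + 1) k \<and> Fdef n (k + 1) \<longrightarrow>
                  F (n + 1) k - F n k = G n (k + 1) - G n k)"
proof -
  define kk where "kk n k = of_int K * of_int n + k0 + of_int k + of_int D * of_int n" for n k :: int
  define aa where "aa n k = of_int (A - D) * of_int n + a" for n k :: int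
  define bb where "bb n k = of_int (B - D) * of_int n + b" for n k :: int
  define cc where "cc n k = of_int (C - D) * of_int n + c" for n k :: int
  define G where "G n k = lattice_cofactor (K + D) (A - D) (B - D) (C - D) (kk n k) (aa n k) (bb n k) (cc n k) d
    * lattice_base (K + D) (A - D) (B - D) (C - D) (kk n k) (aa n k) (bb n k) (cc n k) d" for n k
  have diag: "F n k = F0 (kk n k) (aa n k) (bb n k) (cc n k) d"
    "Fdef n k \<longleftrightarrow> F0_defined (kk n k) (aa n k) (bb n k) (cc n k) d" for n k
    unfolding F_def Fdef_def kk_def aa_def bb_def cc_def
    by (simp_all only: F0_diagonal_line F0_defined_diagonal_line)
  have step: "kk (n + 1) k = kk n k + of_int (K + D)" "aa (n + 1) k = aa n k + of_int (A - D)"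
    "bb (n + 1) k = bb n k + of_int (B - D)" "cc (n + 1) k = cc n k + of_int (C - D)"
    "kk n (k + 1) = kk n k + 1" "aa n (k + 1) = aa n k" "bb n (k + 1) = bb n k" "cc n (k + 1) = cc n k"
    for n k by (simp_all add: kk_def aa_def bb_def cc_def algebra_simps)
  have "hypergeometric2 G"
    unfolding G_def kk_def aa_def bb_def cc_def
    by (intro hypergeometric2_lattice_cofactor_base affine_term_add affine_term_fst affine_term_snd
        affine_term_const)
  moreover have "F (n + 1) k - F n k = G n (k + 1) - G n k"
    if "Fdef n k \<and> Fdef (n + 1) k \<and> Fdef n (k + 1)" for n k
  proof -
    have "F0_defined (kk n k) (aa n k) (bb n k) (cc n k) d"
      "F0_defined (kk n k + of_int (K + D)) (aa n k + of_int (A - D)) (bb n k + of_int (B - D))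
         (cc n k + of_int (C - D)) d"
      using that unfolding diag step by blast+
    then show ?thesis unfolding diag step G_def by (rule F0_diff_lattice_cofactor_base)
  qed
  ultimately show ?thesis by blast
qed

end
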